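(* Let $L$ be a complete lattice and $X$ a dcpo. There is a bijective correspondence between maps $f\colon L\to\mathcal{O}(X)$ preserving all joins and the top element and Scott continuous maps $g\colon X\to(L\setminus\{1\})^{\mathrm{op}}$, given by $$\overline{f}(x)=\bigvee\{a\in L: x\notin f(a)\},\qquad\overline{g}(a)=\{x\in X: a\not\le g(x)\};$$ in particular $\overline f(x)\ne 1$, $\overline f$ sends directed joins in $X$ to meets in $L$, and $\overline g(a)$ is Scott open with $\overline g(1)=X$. The monad on $\mathbf{Dcpo}$ induced by the resulting adjunction is isomorphic to the Hoare power domain $\mathcal{H}$, where $\mathcal{H}(X)$ is the set of non-empty Scott closed subsets of $X$ ordered by inclusion, $\mathcal{H}(f)(U)$ is the closure of $f(U)$, the unit is $x\mapsto{\downarrow}x$ and the multiplication is $A\mapsto\overline{\bigcup A}$ (closure of the union). Under this correspondence a Kleisli map $g\colon X\to\mathcal{H}(Y)$ corresponds to the predicate transformer $\mathcal{O}(Y)\to\mathcal{O}(X)$, $V\mapsto\{x: V\cap g(x)\ne\emptyset\}$.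
   Context: For a dcpo $X$, $\mathcal{O}(X)$ is the complete lattice of Scott open subsets (upsets $U$ such that any directed join in $U$ has some member of the directed set in $U$), ordered by inclusion; Scott closed sets are their complements; ${\downarrow}x=\{y:y\le x\}$. $(L\setminus\{1\})^{\mathrm{op}}$ is $L$ minus its top with reversed order, a dcpo with directed joins given by meets in $L$. $\mathbf{Dcpo}$ is the category of dcpos and Scott continuous maps. *)

theory Defs
  imports Main
begin

definition po_dual :: "('a \<Rightarrow> 'a \<Rightarrow> bool) \<Rightarrow> 'a \<Rightarrow> 'a \<Rightarrow> bool" where
  "po_dual le = (\<lambda>x y. le y x)"

definition is_poset :: "'a set \<Rightarrow> ('a \<Rightarrow> 'a \<Rightarrow> bool) \<Rightarrow> bool" where
  "is_poset P le \<longleftrightarrow> (\<forall>x\<in>P. le x x) \<and>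
     (\<forall>x\<in>P. \<forall>y\<in>P. le x y \<and> le y x \<longrightarrow> x = y) \<and>
     (\<forall>x\<in>P. \<forall>y\<in>P. \<forall>z\<in>P. le x y \<and> le y z \<longrightarrow> le x z)"

definition is_lub :: "'a set \<Rightarrow> ('a \<Rightarrow> 'a \<Rightarrow> bool) \<Rightarrow> 'a set \<Rightarrow> 'a \<Rightarrow> bool" where
  "is_lub P le A s \<longleftrightarrow> s \<in> P \<and> (\<forall>a\<in>A. le a s) \<and> (\<forall>u\<in>P. (\<forall>a\<in>A. le a u) \<longrightarrow> le s u)"

definition lub :: "'a set \<Rightarrow> ('a \<Rightarrow> 'a \<Rightarrow> bool) \<Rightarrow> 'a set \<Rightarrow> 'a" where
  "lub P le A = (THE s. is_lub P le A s)"

definition is_directed :: "'a set \<Rightarrow> ('a \<Rightarrow> 'a \<Rightarrow> bool) \<Rightarrow> 'a set \<Rightarrow> bool" where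
  "is_directed P le D \<longleftrightarrow> D \<subseteq> P \<and> D \<noteq> {} \<and> (\<forall>x\<in>D. \<forall>y\<in>D. \<exists>z\<in>D. le x z \<and> le y z)"

definition is_dcpo :: "'a set \<Rightarrow> ('a \<Rightarrow> 'a \<Rightarrow> bool) \<Rightarrow> bool" where
  "is_dcpo P le \<longleftrightarrow> is_poset P le \<and> (\<forall>D. is_directed P le D \<longrightarrow> (\<exists>s. is_lub P le D s))"

definition is_complete_lattice :: "'a set \<Rightarrow> ('a \<Rightarrow> 'a \<Rightarrow> bool) \<Rightarrow> bool" where
  "is_complete_lattice P le \<longleftrightarrow> is_poset P le \<and> (\<forall>A. A \<subseteq> P \<longrightarrow> (\<exists>s. is_lub P le A s))"

definition lat_top :: "'a set \<Rightarrow> ('a \<Rightarrow> 'a \<Rightarrow> bool) \<Rightarrow> 'a" where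
  "lat_top P le = lub P le P"

text \<open>Carrier of \<open>(L \ {1})^op\<close> (its order is \<open>po_dual le\<close>).\<close>
definition proper :: "'a set \<Rightarrow> ('a \<Rightarrow> 'a \<Rightarrow> bool) \<Rightarrow> 'a set" where
  "proper L le = L - {lat_top L le}"

definition scott_open :: "'a set \<Rightarrow> ('a \<Rightarrow> 'a \<Rightarrow> bool) \<Rightarrow> 'a set \<Rightarrow> bool" where
  "scott_open P le U \<longleftrightarrow> U \<subseteq> P \<and> (\<forall>x\<in>U. \<forall>y\<in>P. le x y \<longrightarrow> y \<in> U) \<and>
     (\<forall>D. is_directed P le D \<longrightarrow> lub P le D \<in> U \<longrightarrow> D \<inter> U \<noteq> {})"

definition opens :: "'a set \<Rightarrow> ('a \<Rightarrow> 'a \<Rightarrow> bool) \<Rightarrow> 'a set set" where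
  "opens P le = {U. scott_open P le U}"

definition scott_closed :: "'a set \<Rightarrow> ('a \<Rightarrow> 'a \<Rightarrow> bool) \<Rightarrow> 'a set \<Rightarrow> bool" where
  "scott_closed P le C \<longleftrightarrow> C \<subseteq> P \<and> scott_open P le (P - C)"

definition scott_cont :: "'a set \<Rightarrow> ('a \<Rightarrow> 'a \<Rightarrow> bool) \<Rightarrow> 'b set \<Rightarrow> ('b \<Rightarrow> 'b \<Rightarrow> bool)
     \<Rightarrow> ('a \<Rightarrow> 'b) \<Rightarrow> bool" where
  "scott_cont P le Q le' f \<longleftrightarrow> f ` P \<subseteq> Q \<and>
     (\<forall>D. is_directed P le D \<longrightarrow> is_lub Q le' (f ` D) (f (lub P le D)))"

definition join_top_map :: "'a set \<Rightarrow> ('a \<Rightarrow> 'a \<Rightarrow> bool) \<Rightarrow> 'b set \<Rightarrow> ('b \<Rightarrow> 'b \<Rightarrow> bool)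
     \<Rightarrow> ('a \<Rightarrow> 'b) \<Rightarrow> bool" where
  "join_top_map L le M le' f \<longleftrightarrow> f ` L \<subseteq> M \<and>
     (\<forall>A. A \<subseteq> L \<longrightarrow> f (lub L le A) = lub M le' (f ` A)) \<and>
     f (lat_top L le) = lat_top M le'"

definition fbar :: "'l set \<Rightarrow> ('l \<Rightarrow> 'l \<Rightarrow> bool) \<Rightarrow> ('l \<Rightarrow> 'a set) \<Rightarrow> 'a \<Rightarrow> 'l" where
  "fbar L le f x = lub L le {a \<in> L. x \<notin> f a}"

definition gbar :: "'a set \<Rightarrow> 'l set \<Rightarrow> ('l \<Rightarrow> 'l \<Rightarrow> bool) \<Rightarrow> ('a \<Rightarrow> 'l) \<Rightarrow> 'l \<Rightarrow> 'a set" where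
  "gbar X L le g a = {x \<in> X. \<not> le a (g x)}"

text \<open>Counit (as a map in the lattice category) \<open>L \<rightarrow> \<O>((L\{1})^op)\<close>: the
  correspondent of the identity of \<open>(L\{1})^op\<close>.\<close>
definition counit :: "'l set \<Rightarrow> ('l \<Rightarrow> 'l \<Rightarrow> bool) \<Rightarrow> 'l \<Rightarrow> 'l set" where
  "counit L le = gbar (proper L le) L le id"

text \<open>Right adjoint on morphisms: for a join/top preserving \<open>k : M \<rightarrow> L\<close>,
  \<open>G k : (L\{1})^op \<rightarrow> (M\{1})^op\<close> corresponds to \<open>counit L \<circ> k\<close>.\<close>
definition Gmap :: "'l set \<Rightarrow> ('l \<Rightarrow> 'l \<Rightarrow> bool) \<Rightarrow> 'm set \<Rightarrow> ('m \<Rightarrow> 'm \<Rightarrow> bool)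
     \<Rightarrow> ('m \<Rightarrow> 'l) \<Rightarrow> 'l \<Rightarrow> 'm" where
  "Gmap L le M le' k = fbar M le' (counit L le \<circ> k)"

text \<open>The induced monad \<open>T = G F\<close> on dcpos: \<open>T X = (\<O>(X)\{X})^op\<close>.\<close>
definition Tobj :: "'a set \<Rightarrow> ('a \<Rightarrow> 'a \<Rightarrow> bool) \<Rightarrow> 'a set set" where
  "Tobj X le = proper (opens X le) (\<subseteq>)"

definition Tord :: "'a set \<Rightarrow> 'a set \<Rightarrow> bool" where
  "Tord = po_dual (\<subseteq>)"

definition Tmap :: "'a set \<Rightarrow> ('a \<Rightarrow> 'a \<Rightarrow> bool) \<Rightarrow> 'b set \<Rightarrow> ('b \<Rightarrow> 'b \<Rightarrow> bool)
     \<Rightarrow> ('a \<Rightarrow> 'b) \<Rightarrow> 'a set \<Rightarrow> 'b set" where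
  "Tmap X le Y le' h = Gmap (opens X le) (\<subseteq>) (opens Y le') (\<subseteq>) (\<lambda>V. h -` V \<inter> X)"

definition Tunit :: "'a set \<Rightarrow> ('a \<Rightarrow> 'a \<Rightarrow> bool) \<Rightarrow> 'a \<Rightarrow> 'a set" where
  "Tunit X le = fbar (opens X le) (\<subseteq>) id"

definition Tmult :: "'a set \<Rightarrow> ('a \<Rightarrow> 'a \<Rightarrow> bool) \<Rightarrow> 'a set set \<Rightarrow> 'a set" where
  "Tmult X le = Gmap (opens (Tobj X le) Tord) (\<subseteq>) (opens X le) (\<subseteq>) (counit (opens X le) (\<subseteq>))"

definition scl :: "'a set \<Rightarrow> ('a \<Rightarrow> 'a \<Rightarrow> bool) \<Rightarrow> 'a set \<Rightarrow> 'a set" where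
  "scl X le A = \<Inter>{C. scott_closed X le C \<and> A \<subseteq> C}"

definition Hobj :: "'a set \<Rightarrow> ('a \<Rightarrow> 'a \<Rightarrow> bool) \<Rightarrow> 'a set set" where
  "Hobj X le = {C. scott_closed X le C \<and> C \<noteq> {}}"

definition Hmap :: "'b set \<Rightarrow> ('b \<Rightarrow> 'b \<Rightarrow> bool) \<Rightarrow> ('a \<Rightarrow> 'b) \<Rightarrow> 'a set \<Rightarrow> 'b set" where
  "Hmap Y le' h C = scl Y le' (h ` C)"

definition Hunit :: "'a set \<Rightarrow> ('a \<Rightarrow> 'a \<Rightarrow> bool) \<Rightarrow> 'a \<Rightarrow> 'a set" where
  "Hunit X le x = {y \<in> X. le y x}"

definition Hmult :: "'a set \<Rightarrow> ('a \<Rightarrow> 'a \<Rightarrow> bool) \<Rightarrow> 'a set set \<Rightarrow> 'a set" where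
  "Hmult X le A = scl X le (\<Union>A)"

text \<open>The monad isomorphism \<open>T X \<rightarrow> \<H> X\<close>, \<open>U \<mapsto> X - U\<close>.\<close>
definition theta :: "'a set \<Rightarrow> 'a set \<Rightarrow> 'a set" where
  "theta X U = X - U"

end

theory Submission
  imports Defs
begin

text \<open>
  Because \<open>f\<close> preserves joins, \<open>fbar f x\<close> is the largest \<open>a\<close> with \<open>x \<notin> f a\<close>, so
  \<open>a \<le> fbar f x \<longleftrightarrow> x \<notin> f a\<close>, while \<open>x \<in> gbar g a \<longleftrightarrow> a \<not>\<le> g x\<close> by definition; these
  two equivalences make the constructions mutually inverse. Scott openness of the sets
  \<open>f a\<close> is exactly what makes \<open>fbar f\<close> send directed joins to meets, and conversely
  continuity of \<open>g\<close> makes every \<open>gbar g a\<close> Scott open.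
  For the monad, complementation identifies the proper Scott opens with the non-empty
  Scott closed sets. Each structure map of the induced monad evaluates to a union of
  opens, whose complement is a Scott closure. For the multiplication one also needs that
  closing a family inside \<open>\<H>(X)\<close> before taking the union does not change the closure of
  the union; this holds because the closed sets contained in a fixed closed set form a
  Scott closed subset of \<open>\<H>(X)\<close>.
\<close>

section \<open>Posets and joins\<close>

lemma poset_refl: "is_poset P le \<Longrightarrow> a \<in> P \<Longrightarrow> le a a"
  unfolding is_poset_def by blast

lemma poset_antisym: "is_poset P le \<Longrightarrow> a \<in> P \<Longrightarrow> b \<in> P \<Longrightarrow> le a b \<Longrightarrow> le b a \<Longrightarrow> a = b"
  unfolding is_poset_def by blast

lemma poset_trans:
  "is_poset P le \<Longrightarrow> a \<in> P \<Longrightarrow> b \<in> P \<Longrightarrow> c \<in> P \<Longrightarrow> le a b \<Longrightarrow> le b c \<Longrightarrow> le a c"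
  unfolding is_poset_def by blast

lemma complete_lattice_poset: "is_complete_lattice L le \<Longrightarrow> is_poset L le"
  by (simp add: is_complete_lattice_def)

lemma dcpo_poset: "is_dcpo X le \<Longrightarrow> is_poset X le"
  by (simp add: is_dcpo_def)

lemma lub_eqI:
  assumes P: "is_poset P le" and s: "is_lub P le A s"
  shows "lub P le A = s"
  unfolding lub_def
proof (rule the_equality)
  fix t assume "is_lub P le A t"
  with s show "t = s" by (intro poset_antisym[OF P]) (auto simp: is_lub_def)
qed (rule s)

lemma lub_subset_eqI: "is_lub P (\<subseteq>) A s \<Longrightarrow> lub P (\<subseteq>) A = s"
  unfolding lub_def by (rule the_equality) (auto simp: is_lub_def)

lemma complete_lattice_is_lub:
  "is_complete_lattice L le \<Longrightarrow> A \<subseteq> L \<Longrightarrow> is_lub L le A (lub L le A)"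
  unfolding is_complete_lattice_def using lub_eqI by metis

lemma dcpo_is_lub: "is_dcpo X le \<Longrightarrow> is_directed X le D \<Longrightarrow> is_lub X le D (lub X le D)"
  unfolding is_dcpo_def using lub_eqI by metis

lemma complete_lattice_lub_le_iff:
  assumes "is_complete_lattice L le" "A \<subseteq> L" "u \<in> L"
  shows "le (lub L le A) u \<longleftrightarrow> (\<forall>a\<in>A. le a u)"
  using complete_lattice_is_lub[OF assms(1,2)] poset_trans[OF complete_lattice_poset[OF assms(1)]] assms(2,3)
  unfolding is_lub_def by blast

lemma is_lub_po_dualI:
  assumes "s \<in> P" "le s s" "\<And>u. u \<in> P \<Longrightarrow> le u s \<longleftrightarrow> (\<forall>a\<in>A. le u a)"
  shows "is_lub P (po_dual le) A s"
  using assms unfolding is_lub_def po_dual_def by blast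

lemma lat_top_in: "is_complete_lattice L le \<Longrightarrow> lat_top L le \<in> L"
  unfolding lat_top_def using complete_lattice_is_lub[of L le L] by (simp add: is_lub_def)

lemma le_lat_top: "is_complete_lattice L le \<Longrightarrow> a \<in> L \<Longrightarrow> le a (lat_top L le)"
  unfolding lat_top_def using complete_lattice_is_lub[of L le L] by (simp add: is_lub_def)

lemma proper_iff:
  assumes L: "is_complete_lattice L le"
  shows "y \<in> proper L le \<longleftrightarrow> y \<in> L \<and> \<not> le (lat_top L le) y"
proof -
  have "y = lat_top L le" if "y \<in> L" "le (lat_top L le) y"
    using that poset_antisym[OF complete_lattice_poset[OF L]] lat_top_in[OF L] le_lat_top[OF L]
    by blast
  then show ?thesis using poset_refl[OF complete_lattice_poset[OF L] lat_top_in[OF L]] by (auto simp: proper_def)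
qed

section \<open>Scott open and Scott closed sets\<close>

lemma opens_subset: "U \<in> opens X le \<Longrightarrow> U \<subseteq> X"
  unfolding opens_def scott_open_def by auto

lemma Union_in_opens: "B \<subseteq> opens X le \<Longrightarrow> \<Union>B \<in> opens X le"
  unfolding opens_def scott_open_def by blast

lemma carrier_in_opens: "X \<in> opens X le"
  unfolding opens_def scott_open_def is_directed_def by auto

lemma lub_opens: "B \<subseteq> opens X le \<Longrightarrow> lub (opens X le) (\<subseteq>) B = \<Union>B"
  by (rule lub_subset_eqI) (use Union_in_opens in \<open>auto simp: is_lub_def\<close>)

lemma lat_top_opens: "lat_top (opens X le) (\<subseteq>) = X"
  unfolding lat_top_def using lub_opens[of "opens X le" X le] carrier_in_opens opens_subset
  by blast

lemma fbar_opens: "fbar (opens Y le) (\<subseteq>) f x = \<Union>{V \<in> opens Y le. x \<notin> f V}"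
  unfolding fbar_def by (rule lub_opens) blast

lemma scott_open_lub_iff:
  assumes X: "is_dcpo X le" and U: "scott_open X le U" and D: "is_directed X le D"
  shows "lub X le D \<in> U \<longleftrightarrow> D \<inter> U \<noteq> {}"
proof
  show "lub X le D \<in> U \<Longrightarrow> D \<inter> U \<noteq> {}" using U D by (simp add: scott_open_def)
next
  assume "D \<inter> U \<noteq> {}"
  then obtain d where "d \<in> D" "d \<in> U" by blast
  moreover have "lub X le D \<in> X" "\<forall>d\<in>D. le d (lub X le D)"
    using dcpo_is_lub[OF X D] by (simp_all add: is_lub_def)
  ultimately show "lub X le D \<in> U" using U unfolding scott_open_def by blast
qed

lemma scott_closed_iff: "scott_closed X le C \<longleftrightarrow> C \<subseteq> X \<and> X - C \<in> opens X le"
  unfolding scott_closed_def opens_def by blast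

lemma scott_cont_in: "scott_cont P le Q le' g \<Longrightarrow> x \<in> P \<Longrightarrow> g x \<in> Q"
  unfolding scott_cont_def by blast

lemma scott_cont_mono:
  assumes X: "is_dcpo X le" and g: "scott_cont X le Q le' g"
    and xy: "x \<in> X" "y \<in> X" "le x y"
  shows "le' (g x) (g y)"
proof -
  have P: "is_poset X le" by (rule dcpo_poset[OF X])
  then have yy: "le y y" using xy by (simp add: poset_refl)
  have "is_directed X le {x, y}" unfolding is_directed_def using xy yy by blast
  then have "is_lub Q le' (g ` {x, y}) (g (lub X le {x, y}))" using g unfolding scott_cont_def by blast
  moreover have "lub X le {x, y} = y"
    by (rule lub_eqI[OF P]) (use xy yy in \<open>simp add: is_lub_def\<close>)
  ultimately show ?thesis by (simp add: is_lub_def)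
qed

section \<open>The correspondence\<close>

lemma join_top_map_in: "join_top_map L le M le' f \<Longrightarrow> a \<in> L \<Longrightarrow> f a \<in> M"
  unfolding join_top_map_def by blast

lemma join_top_map_opens_lub:
  "join_top_map L leL (opens X le) (\<subseteq>) f \<Longrightarrow> A \<subseteq> L \<Longrightarrow> f (lub L leL A) = \<Union>(f ` A)"
  unfolding join_top_map_def using lub_opens by (metis image_subset_iff subset_iff)

lemma join_top_map_opens_top:
  "join_top_map L leL (opens X le) (\<subseteq>) f \<Longrightarrow> f (lat_top L leL) = X"
  unfolding join_top_map_def lat_top_opens by simp

lemma join_top_map_opens_mono:
  assumes L: "is_complete_lattice L leL" and J: "join_top_map L leL (opens X le) (\<subseteq>) f"
    and ab: "a \<in> L" "b \<in> L" "leL a b"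
  shows "f a \<subseteq> f b"
proof -
  have "lub L leL {a, b} = b"
    by (rule lub_eqI[OF complete_lattice_poset[OF L]])
      (use ab poset_refl[OF complete_lattice_poset[OF L]] in \<open>auto simp: is_lub_def\<close>)
  then show ?thesis using join_top_map_opens_lub[OF J, of "{a, b}"] ab by auto
qed

lemma fbar_le_iff:
  assumes L: "is_complete_lattice L leL" and J: "join_top_map L leL (opens X le) (\<subseteq>) f"
    and a: "a \<in> L"
  shows "leL a (fbar L leL f x) \<longleftrightarrow> x \<notin> f a"
proof -
  let ?S = "{a \<in> L. x \<notin> f a}"
  have lub: "is_lub L leL ?S (fbar L leL f x)"
    unfolding fbar_def by (rule complete_lattice_is_lub[OF L]) auto
  have "f (fbar L leL f x) = \<Union>(f ` ?S)"
    unfolding fbar_def by (rule join_top_map_opens_lub[OF J]) auto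
  then have "x \<notin> f (fbar L leL f x)" by auto
  then show ?thesis
    using join_top_map_opens_mono[OF L J a] lub a unfolding is_lub_def by blast
qed

lemma fbar_in_proper:
  assumes L: "is_complete_lattice L leL" and J: "join_top_map L leL (opens X le) (\<subseteq>) f"
    and x: "x \<in> X"
  shows "fbar L leL f x \<in> proper L leL"
proof -
  have "fbar L leL f x \<in> L"
    using complete_lattice_is_lub[OF L, of "{a \<in> L. x \<notin> f a}"] by (auto simp: fbar_def is_lub_def)
  moreover have "x \<in> f (lat_top L leL)" using join_top_map_opens_top[OF J] x by simp
  ultimately show ?thesis
    using fbar_le_iff[OF L J lat_top_in[OF L]] proper_iff[OF L] by blast
qed

lemma scott_cont_fbar:
  assumes L: "is_complete_lattice L leL" and X: "is_dcpo X le"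
    and J: "join_top_map L leL (opens X le) (\<subseteq>) f"
  shows "scott_cont X le (proper L leL) (po_dual leL) (fbar L leL f)"
  unfolding scott_cont_def
proof (intro conjI allI impI)
  show "fbar L leL f ` X \<subseteq> proper L leL" using fbar_in_proper[OF L J] by blast
next
  fix D assume D: "is_directed X le D"
  have DX: "D \<subseteq> X" using D by (simp add: is_directed_def)
  let ?s = "lub X le D"
  have "?s \<in> X" using dcpo_is_lub[OF X D] by (simp add: is_lub_def)
  then have s: "fbar L leL f ?s \<in> proper L leL" by (rule fbar_in_proper[OF L J])
  show "is_lub (proper L leL) (po_dual leL) (fbar L leL f ` D) (fbar L leL f ?s)"
  proof (rule is_lub_po_dualI[OF s])
    show "leL (fbar L leL f ?s) (fbar L leL f ?s)"
      using s poset_refl[OF complete_lattice_poset[OF L]] by (simp add: proper_def)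
  next
    fix u assume "u \<in> proper L leL"
    then have u: "u \<in> L" by (simp add: proper_def)
    have "scott_open X le (f u)" using join_top_map_in[OF J u] by (simp add: opens_def)
    then have "leL u (fbar L leL f ?s) \<longleftrightarrow> D \<inter> f u = {}"
      using fbar_le_iff[OF L J u] scott_open_lub_iff[OF X _ D] by blast
    also have "\<dots> \<longleftrightarrow> (\<forall>d\<in>D. leL u (fbar L leL f d))"
      using fbar_le_iff[OF L J u] by blast
    finally show "leL u (fbar L leL f ?s) \<longleftrightarrow> (\<forall>a\<in>fbar L leL f ` D. leL u a)" by simp
  qed
qed

lemma gbar_fbar:
  assumes L: "is_complete_lattice L leL" and J: "join_top_map L leL (opens X le) (\<subseteq>) f"
    and a: "a \<in> L"
  shows "gbar X L leL (fbar L leL f) a = f a"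
proof -
  have "f a \<subseteq> X" using opens_subset[OF join_top_map_in[OF J a]] .
  then show ?thesis using fbar_le_iff[OF L J a] by (auto simp: gbar_def)
qed

lemma scott_open_gbar:
  assumes L: "is_complete_lattice L leL" and X: "is_dcpo X le"
    and g: "scott_cont X le (proper L leL) (po_dual leL) g" and a: "a \<in> L"
  shows "scott_open X le (gbar X L leL g a)"
proof -
  note gP = scott_cont_in[OF g]
  then have gL: "\<And>x. x \<in> X \<Longrightarrow> g x \<in> L" by (simp add: proper_def)
  show ?thesis
    unfolding scott_open_def
  proof (intro conjI ballI allI impI)
    show "gbar X L leL g a \<subseteq> X" by (auto simp: gbar_def)
  next
    fix x y assume x: "x \<in> gbar X L leL g a" and y: "y \<in> X" and "le x y"
    then have "leL (g y) (g x)"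
      using scott_cont_mono[OF X g] by (auto simp: gbar_def po_dual_def)
    then show "y \<in> gbar X L leL g a"
      using x y poset_trans[OF complete_lattice_poset[OF L] a] gL by (auto simp: gbar_def)
  next
    fix D assume D: "is_directed X le D" and s: "lub X le D \<in> gbar X L leL g a"
    show "D \<inter> gbar X L leL g a \<noteq> {}"
    proof
      assume "D \<inter> gbar X L leL g a = {}"
      then have below: "\<forall>d\<in>D. leL a (g d)" using D by (auto simp: gbar_def is_directed_def)
      moreover obtain d where "d \<in> D" using D by (auto simp: is_directed_def)
      ultimately have "a \<noteq> lat_top L leL" using gP proper_iff[OF L] D by (auto simp: is_directed_def)
      then have "a \<in> proper L leL" using a by (simp add: proper_def)
      then have "leL a (g (lub X le D))"
        using g D below by (auto simp: scott_cont_def is_lub_def po_dual_def)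
      then show False using s by (simp add: gbar_def)
    qed
  qed
qed

lemma join_top_map_gbar:
  assumes L: "is_complete_lattice L leL" and X: "is_dcpo X le"
    and g: "scott_cont X le (proper L leL) (po_dual leL) g"
  shows "join_top_map L leL (opens X le) (\<subseteq>) (gbar X L leL g)"
proof -
  note gP = scott_cont_in[OF g]
  then have gL: "\<And>x. x \<in> X \<Longrightarrow> g x \<in> L" by (simp add: proper_def)
  have opens: "gbar X L leL g ` L \<subseteq> opens X le"
    using scott_open_gbar[OF L X g] by (auto simp: opens_def)
  have "gbar X L leL g (lub L leL A) = lub (opens X le) (\<subseteq>) (gbar X L leL g ` A)"
    if A: "A \<subseteq> L" for A
  proof -
    have "gbar X L leL g (lub L leL A) = \<Union>(gbar X L leL g ` A)"
      using complete_lattice_lub_le_iff[OF L A] gL by (auto simp: gbar_def)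
    then show ?thesis using opens A lub_opens by (metis image_mono subset_trans)
  qed
  moreover have "gbar X L leL g (lat_top L leL) = X"
    using gP proper_iff[OF L] by (auto simp: gbar_def)
  ultimately show ?thesis using opens by (simp add: join_top_map_def lat_top_opens)
qed

lemma fbar_gbar:
  assumes L: "is_complete_lattice L leL"
    and g: "scott_cont X le (proper L leL) (po_dual leL) g" and x: "x \<in> X"
  shows "fbar L leL (gbar X L leL g) x = g x"
proof -
  have "g x \<in> L" using scott_cont_in[OF g x] by (simp add: proper_def)
  have "{a \<in> L. x \<notin> gbar X L leL g a} = {a \<in> L. leL a (g x)}"
    using x by (auto simp: gbar_def)
  then have "fbar L leL (gbar X L leL g) x = lub L leL {a \<in> L. leL a (g x)}"
    by (simp add: fbar_def)
  also have "\<dots> = g x"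
    by (rule lub_eqI[OF complete_lattice_poset[OF L]])
      (use \<open>g x \<in> L\<close> poset_refl[OF complete_lattice_poset[OF L]] in \<open>simp add: is_lub_def\<close>)
  finally show ?thesis .
qed

lemma fbar_vimage: "x \<in> X' \<Longrightarrow> fbar L leL (\<lambda>a. h -` f a \<inter> X') x = fbar L leL f (h x)"
  unfolding fbar_def by (rule arg_cong[where f = "lub L leL"]) blast

lemma counit_eq: "counit L le b = {y \<in> proper L le. \<not> le b y}"
  by (simp add: counit_def gbar_def)

lemma fbar_comp_Gmap:
  assumes L: "is_complete_lattice L leL" and J: "join_top_map L leL (opens X le) (\<subseteq>) f"
    and k: "join_top_map M leM L leL k" and x: "x \<in> X"
  shows "fbar M leM (f \<circ> k) x = Gmap L leL M leM k (fbar L leL f x)"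
proof -
  have "{m \<in> M. x \<notin> f (k m)} = {m \<in> M. fbar L leL f x \<notin> counit L leL (k m)}"
    using fbar_le_iff[OF L J join_top_map_in[OF k]] fbar_in_proper[OF L J x]
    by (auto simp: counit_eq)
  then show ?thesis by (simp add: Gmap_def fbar_def)
qed

section \<open>Scott closure and the Hoare power domain\<close>

lemma scott_closed_carrier: "scott_closed Y le Y"
  unfolding scott_closed_def scott_open_def by simp

lemma scl_subset: "A \<subseteq> Y \<Longrightarrow> scl Y le A \<subseteq> Y"
  unfolding scl_def using scott_closed_carrier by blast

lemma scl_ext: "A \<subseteq> scl Y le A"
  unfolding scl_def by blast

lemma scl_least: "scott_closed Y le K \<Longrightarrow> A \<subseteq> K \<Longrightarrow> scl Y le A \<subseteq> K"
  unfolding scl_def by blast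

lemma scl_mono: "A \<subseteq> B \<Longrightarrow> scl Y le A \<subseteq> scl Y le B"
  unfolding scl_def by blast

lemma compl_scl:
  assumes A: "A \<subseteq> Y"
  shows "Y - scl Y le A = \<Union>{V \<in> opens Y le. V \<inter> A = {}}"
proof (intro equalityI subsetI)
  fix y assume "y \<in> Y - scl Y le A"
  then obtain C where "scott_closed Y le C" "A \<subseteq> C" "y \<notin> C" "y \<in> Y" by (auto simp: scl_def)
  then show "y \<in> \<Union>{V \<in> opens Y le. V \<inter> A = {}}" by (auto simp: scott_closed_iff)
next
  fix y assume "y \<in> \<Union>{V \<in> opens Y le. V \<inter> A = {}}"
  then obtain V where V: "V \<in> opens Y le" "V \<inter> A = {}" "y \<in> V" by blast
  have "V \<subseteq> Y" using V(1) by (rule opens_subset)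
  then have "scott_closed Y le (Y - V)" using V by (simp add: scott_closed_iff double_diff)
  then show "y \<in> Y - scl Y le A" using V \<open>V \<subseteq> Y\<close> A scl_least[of Y le "Y - V" A] by blast
qed

lemma scl_eq: "A \<subseteq> Y \<Longrightarrow> scl Y le A = Y - \<Union>{V \<in> opens Y le. V \<inter> A = {}}"
  using compl_scl[of A Y le] scl_subset[of A Y le] by blast

lemma scott_closed_scl: "A \<subseteq> Y \<Longrightarrow> scott_closed Y le (scl Y le A)"
  unfolding scott_closed_iff using compl_scl[of A Y le] scl_subset[of A Y le]
  by (simp add: Union_in_opens subset_iff)

lemma Tobj_eq: "Tobj X le = opens X le - {X}"
  unfolding Tobj_def proper_def lat_top_opens by simp

lemma theta_theta_Tobj: "U \<in> Tobj X le \<Longrightarrow> theta X (theta X U) = U"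
  using opens_subset[of U X le] by (auto simp: Tobj_eq theta_def)

lemma theta_in_Hobj: "U \<in> Tobj X le \<Longrightarrow> theta X U \<in> Hobj X le"
  using opens_subset[of U X le] theta_theta_Tobj[of U X le]
  by (auto simp: Tobj_eq Hobj_def scott_closed_iff theta_def)

lemma bij_betw_theta: "bij_betw (theta X) (Tobj X le) (Hobj X le)"
proof (rule bij_betw_byWitness[where f' = "theta X"])
  show "\<forall>C\<in>Hobj X le. theta X (theta X C) = C"
    unfolding Hobj_def theta_def scott_closed_def by blast
  show "theta X ` Hobj X le \<subseteq> Tobj X le"
    by (auto simp: Tobj_eq theta_def Hobj_def scott_closed_iff)
qed (simp_all add: theta_theta_Tobj theta_in_Hobj image_subsetI)

lemma Tord_iff_theta:
  assumes "U \<in> Tobj X le" "V \<in> Tobj X le"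
  shows "Tord U V \<longleftrightarrow> theta X U \<subseteq> theta X V"
  using assms opens_subset[of U X le] opens_subset[of V X le]
  by (auto simp: Tord_def po_dual_def theta_def Tobj_eq)

lemma Gmap_opens:
  "u \<in> proper L le \<Longrightarrow> Gmap L le (opens Y leY) (\<subseteq>) k u = \<Union>{V \<in> opens Y leY. le (k V) u}"
  unfolding Gmap_def fbar_opens by (simp add: counit_eq)

lemma theta_Tmap:
  assumes h: "h ` X \<subseteq> Y" and U: "U \<in> Tobj X le"
  shows "theta Y (Tmap X le Y leY h U) = Hmap Y leY h (theta X U)"
proof -
  have "Tmap X le Y leY h U = \<Union>{V \<in> opens Y leY. h -` V \<inter> X \<subseteq> U}"
    using U unfolding Tmap_def Tobj_def by (rule Gmap_opens)
  also have "\<dots> = \<Union>{V \<in> opens Y leY. V \<inter> h ` (X - U) = {}}"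
    by blast
  finally show ?thesis
    using h by (simp add: theta_def Hmap_def scl_eq image_subset_iff)
qed

lemma Hunit_scott_closed:
  assumes X: "is_dcpo X le" and x: "x \<in> X"
  shows "scott_closed X le (Hunit X le x)"
proof -
  have P: "is_poset X le" by (rule dcpo_poset[OF X])
  have "scott_open X le (X - Hunit X le x)"
    unfolding scott_open_def
  proof (intro conjI ballI allI impI)
    fix a b assume a: "a \<in> X - Hunit X le x" and b: "b \<in> X" and "le a b"
    then have "\<not> le b x" using poset_trans[OF P _ b x, of a] by (auto simp: Hunit_def)
    then show "b \<in> X - Hunit X le x" using b by (simp add: Hunit_def)
  next
    fix D assume D: "is_directed X le D" and s: "lub X le D \<in> X - Hunit X le x"
    show "D \<inter> (X - Hunit X le x) \<noteq> {}"
    proof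
      assume "D \<inter> (X - Hunit X le x) = {}"
      then have "\<forall>d\<in>D. le d x" using D by (auto simp: Hunit_def is_directed_def)
      then have "le (lub X le D) x" using dcpo_is_lub[OF X D] x by (simp add: is_lub_def)
      then show False using s by (simp add: Hunit_def)
    qed
  qed (simp add: Hunit_def)
  then show ?thesis by (simp add: scott_closed_def Hunit_def)
qed

lemma theta_Tunit:
  assumes X: "is_dcpo X le" and x: "x \<in> X"
  shows "theta X (Tunit X le x) = Hunit X le x"
proof -
  have "x \<in> Hunit X le x" using poset_refl[OF dcpo_poset[OF X] x] x by (simp add: Hunit_def)
  moreover have "X - Hunit X le x \<in> opens X le"
    using Hunit_scott_closed[OF X x] by (simp add: scott_closed_iff)
  moreover have "y \<in> Hunit X le x \<Longrightarrow> U \<in> opens X le \<Longrightarrow> y \<in> U \<Longrightarrow> x \<in> U" for y U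
    using x by (auto simp: Hunit_def opens_def scott_open_def)
  ultimately show ?thesis
    unfolding Tunit_def fbar_opens theta_def by (auto simp: Hunit_def)
qed

lemma Hobj_is_lub:
  assumes "\<D> \<subseteq> Hobj X le" "\<D> \<noteq> {}"
  shows "is_lub (Hobj X le) (\<subseteq>) \<D> (scl X le (\<Union>\<D>))"
proof -
  have sub: "\<Union>\<D> \<subseteq> X" and ne: "\<Union>\<D> \<noteq> {}"
    using assms by (auto simp: Hobj_def scott_closed_def)
  have "scl X le (\<Union>\<D>) \<in> Hobj X le"
    using scott_closed_scl[OF sub] scl_ext[of "\<Union>\<D>" X le] ne by (auto simp: Hobj_def)
  moreover have "scl X le (\<Union>\<D>) \<subseteq> C" if "C \<in> Hobj X le" "\<forall>D\<in>\<D>. D \<subseteq> C" for C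
    using that by (intro scl_least) (auto simp: Hobj_def)
  ultimately show ?thesis using scl_ext[of "\<Union>\<D>" X le] by (auto simp: is_lub_def)
qed

lemma scott_closed_Hobj_below:
  assumes K: "scott_closed X le K"
  shows "scott_closed (Hobj X le) (\<subseteq>) {C \<in> Hobj X le. C \<subseteq> K}"
  unfolding scott_closed_def scott_open_def
proof (intro conjI allI impI ballI)
  fix \<D> assume D: "is_directed (Hobj X le) (\<subseteq>) \<D>"
    and l: "lub (Hobj X le) (\<subseteq>) \<D> \<in> Hobj X le - {C \<in> Hobj X le. C \<subseteq> K}"
  have DH: "\<D> \<subseteq> Hobj X le" "\<D> \<noteq> {}" using D by (auto simp: is_directed_def)
  then have "lub (Hobj X le) (\<subseteq>) \<D> = scl X le (\<Union>\<D>)"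
    by (rule lub_subset_eqI[OF Hobj_is_lub])
  then show "\<D> \<inter> (Hobj X le - {C \<in> Hobj X le. C \<subseteq> K}) \<noteq> {}"
    using l scl_least[OF K, of "\<Union>\<D>"] DH by blast
next
  fix A B assume "A \<in> Hobj X le - {C \<in> Hobj X le. C \<subseteq> K}" "B \<in> Hobj X le" "A \<subseteq> B"
  then show "B \<in> Hobj X le - {C \<in> Hobj X le. C \<subseteq> K}" by blast
qed blast+

lemma scl_Union_scl_Hobj:
  assumes C: "\<C> \<subseteq> Hobj X le"
  shows "scl X le (\<Union>(scl (Hobj X le) (\<subseteq>) \<C>)) = scl X le (\<Union>\<C>)"
proof
  have "\<Union>\<C> \<subseteq> X" using C by (auto simp: Hobj_def scott_closed_def)
  then have K: "scott_closed X le (scl X le (\<Union>\<C>))" by (rule scott_closed_scl)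
  have "\<C> \<subseteq> {D \<in> Hobj X le. D \<subseteq> scl X le (\<Union>\<C>)}" using C scl_ext[of "\<Union>\<C>" X le] by blast
  then have "scl (Hobj X le) (\<subseteq>) \<C> \<subseteq> {D \<in> Hobj X le. D \<subseteq> scl X le (\<Union>\<C>)}"
    by (rule scl_least[OF scott_closed_Hobj_below[OF K]])
  then show "scl X le (\<Union>(scl (Hobj X le) (\<subseteq>) \<C>)) \<subseteq> scl X le (\<Union>\<C>)"
    by (intro scl_least[OF K]) blast
next
  show "scl X le (\<Union>\<C>) \<subseteq> scl X le (\<Union>(scl (Hobj X le) (\<subseteq>) \<C>))"
    using scl_ext[of \<C> "Hobj X le" "(\<subseteq>)"] by (intro scl_mono) blast
qed

lemma theta_Tmult:
  assumes U: "\<U> \<in> Tobj (Tobj X le) Tord"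
  shows "theta X (Tmult X le \<U>) = Hmult X le (Hmap (Hobj X le) (\<subseteq>) (theta X) (theta (Tobj X le) \<U>))"
proof -
  define \<C> where "\<C> = theta X ` (Tobj X le - \<U>)"
  have C: "\<C> \<subseteq> Hobj X le" unfolding \<C>_def using bij_betw_theta[of X le] by (auto simp: bij_betw_def)
  then have CX: "\<Union>\<C> \<subseteq> X" by (auto simp: Hobj_def scott_closed_def)
  have "Tmult X le \<U> = \<Union>{V \<in> opens X le. counit (opens X le) (\<subseteq>) V \<subseteq> \<U>}"
    using U unfolding Tmult_def Tobj_def[of "Tobj X le"] by (rule Gmap_opens)
  also have "\<dots> = \<Union>{V \<in> opens X le. V \<inter> \<Union>\<C> = {}}"
  proof (rule arg_cong[where f = Union], rule Collect_cong)
    fix V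
    show "V \<in> opens X le \<and> counit (opens X le) (\<subseteq>) V \<subseteq> \<U> \<longleftrightarrow> V \<in> opens X le \<and> V \<inter> \<Union>\<C> = {}"
      using opens_subset[of V X le] by (auto simp: counit_eq Tobj_def[symmetric] \<C>_def theta_def)
  qed
  finally have "theta X (Tmult X le \<U>) = scl X le (\<Union>\<C>)"
    by (simp add: theta_def scl_eq[OF CX])
  also have "\<dots> = scl X le (\<Union>(scl (Hobj X le) (\<subseteq>) \<C>))" by (rule scl_Union_scl_Hobj[OF C, symmetric])
  finally show ?thesis by (simp add: Hmult_def Hmap_def \<C>_def theta_def)
qed

lemma gbar_theta_eq:
  "V \<in> opens Y leY \<Longrightarrow> gbar X (opens Y leY) (\<subseteq>) (\<lambda>x. theta Y (g x)) V = {x \<in> X. V \<inter> g x \<noteq> {}}"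
  unfolding gbar_def theta_def using opens_subset by blast

theorem mainTheorem9:
  fixes L :: "'l set" and leL :: "'l \<Rightarrow> 'l \<Rightarrow> bool"
    and X :: "'a set" and le :: "'a \<Rightarrow> 'a \<Rightarrow> bool"
  assumes L: "is_complete_lattice L leL"
    and X: "is_dcpo X le"
  shows
    \<comment> \<open>the bijective correspondence\<close>
    "(\<forall>f. join_top_map L leL (opens X le) (\<subseteq>) f \<longrightarrow>
          scott_cont X le (proper L leL) (po_dual leL) (fbar L leL f) \<and>
          (\<forall>a\<in>L. gbar X L leL (fbar L leL f) a = f a))
     \<and> (\<forall>g. scott_cont X le (proper L leL) (po_dual leL) g \<longrightarrow>
          join_top_map L leL (opens X le) (\<subseteq>) (gbar X L leL g) \<and>
          (\<forall>x\<in>X. fbar L leL (gbar X L leL g) x = g x))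
     \<comment> \<open>naturality in the dcpo\<close>
     \<and> (\<forall>(X' :: 'b set) le' (h :: 'b \<Rightarrow> 'a) f. is_dcpo X' le' \<longrightarrow> scott_cont X' le' X le h \<longrightarrow>
          join_top_map L leL (opens X le) (\<subseteq>) f \<longrightarrow>
          (\<forall>x\<in>X'. fbar L leL (\<lambda>a. h -` f a \<inter> X') x = fbar L leL f (h x)))
     \<comment> \<open>naturality in the lattice\<close>
     \<and> (\<forall>(M :: 'm set) leM (k :: 'm \<Rightarrow> 'l) f. is_complete_lattice M leM \<longrightarrow>
          join_top_map M leM L leL k \<longrightarrow> join_top_map L leL (opens X le) (\<subseteq>) f \<longrightarrow>
          (\<forall>x\<in>X. fbar M leM (f \<circ> k) x = Gmap L leL M leM k (fbar L leL f x)))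
     \<comment> \<open>the induced monad is isomorphic to the Hoare power domain\<close>
     \<and> bij_betw (theta X) (Tobj X le) (Hobj X le)
     \<and> (\<forall>U\<in>Tobj X le. \<forall>V\<in>Tobj X le. Tord U V \<longleftrightarrow> theta X U \<subseteq> theta X V)
     \<and> (\<forall>(Y :: 'b set) leY h. is_dcpo Y leY \<longrightarrow> scott_cont X le Y leY h \<longrightarrow>
          (\<forall>U\<in>Tobj X le. theta Y (Tmap X le Y leY h U) = Hmap Y leY h (theta X U)))
     \<and> (\<forall>x\<in>X. theta X (Tunit X le x) = Hunit X le x)
     \<and> (\<forall>\<U>\<in>Tobj (Tobj X le) Tord.
          theta X (Tmult X le \<U>) =
          Hmult X le (Hmap (Hobj X le) (\<subseteq>) (theta X) (theta (Tobj X le) \<U>)))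
     \<comment> \<open>Kleisli maps correspond to predicate transformers\<close>
     \<and> (\<forall>(Y :: 'b set) leY g. is_dcpo Y leY \<longrightarrow> scott_cont X le (Hobj Y leY) (\<subseteq>) g \<longrightarrow>
          (\<forall>V\<in>opens Y leY. gbar X (opens Y leY) (\<subseteq>) (\<lambda>x. theta Y (g x)) V =
                              {x \<in> X. V \<inter> g x \<noteq> {}}))"
proof (intro conjI allI impI ballI)
  show "theta Y (Tmap X le Y leY h U) = Hmap Y leY h (theta X U)"
    if "scott_cont X le Y leY h" "U \<in> Tobj X le" for Y :: "'b set" and leY h U
    using that by (intro theta_Tmap) (auto intro: scott_cont_in)
qed (simp_all add: scott_cont_fbar[OF L X] gbar_fbar[OF L] join_top_map_gbar[OF L X]
       fbar_gbar[OF L] fbar_vimage fbar_comp_Gmap[OF L] bij_betw_theta Tord_iff_theta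
       theta_Tunit[OF X] theta_Tmult gbar_theta_eq)

end
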